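(* Let $H$ be a real or complex Hilbert space of dimension $n$, let $N\ge n$, let $F=\{f_i\}_{i=1}^N$ be a frame for $H$ with frame operator $S_F$, and let $\{q_i\}_{i=1}^N$ be the weight number sequence. Set $c=\max\{q_i\|S_F^{-1/2}f_i\|^2:1\le i\le N\}$, $\Upsilon_1=\{i: q_i\|S_F^{-1/2}f_i\|^2=c\}$, $\Upsilon_2=\{1,\dots,N\}\setminus\Upsilon_1$, and $H_j=\operatorname{span}\{f_i: i\in\Upsilon_j\}$ for $j=1,2$. If $H_1\cap H_2=\{0\}$, then the canonical dual $\{S_F^{-1}f_i\}_{i=1}^N$ is a 1-erasure probabilistic spectrally optimal dual of $F$.
   Context: Inner products are linear in the first argument. A frame for the $n$-dimensional space $H$ is a finite sequence spanning $H$. Analysis operator: $\Theta_F f=(\langle f,f_i\rangle)_i$. Synthesis operator: $\Theta_F^*(c)=\sum_i c_if_i$. Frame operator: $S_F=\Theta_F^*\Theta_F$, which is positive and invertible. A dual frame of $F$ is a frame $G=\{g_i\}_{i=1}^N$ with $f=\sum_i\langle f,f_i\rangle g_i=\sum_i\langle f,g_i\rangle f_i$ for all $f\in H$. A probability sequence $\{p_i\}_{i=1}^N$ satisfies $0\le p_i\le1$ and $\sum p_i=1$. The weight numbers are $q_i=\frac{\sum_j p_j}{\sum_j p_j-p_i}\cdot\frac{N-1}{n}$ (assumed well defined). $\mathcal{D}_1^p$ is the set of $N\times N$ diagonal matrices having exactly one nonzero diagonal entry, that entry being $q_i$ in position $(i,i)$. $\mathcal{R}_1^p(F,G)=\max\{\rho(\Theta_G^*D\Theta_F):D\in\mathcal{D}_1^p\}$,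 where $\rho$ is spectral radius. A dual $G$ of $F$ is a 1-erasure probabilistic spectrally optimal dual of $F$ if $\mathcal{R}_1^p(F,G)=\inf\{\mathcal{R}_1^p(F,G'): G' \text{ a dual frame of } F\}$. *)

theory Defs
  imports "Jordan_Normal_Form.Spectral_Radius" "Jordan_Normal_Form.Schur_Decomposition"
begin

text \<open>The Hilbert space H of dimension n is modelled as K^n inside complex^n, where the
  scalar field K is either the reals (K = Reals) or the complex numbers (K = UNIV).
  The inner product is the standard one, linear in the first argument:
  inner v w = sum_k v_k * conj (w_k), i.e. v \<bullet>c w.  Finite sequences f_1..f_N are
  functions on indices 0..N-1.\<close>

definition hspace :: "complex set \<Rightarrow> nat \<Rightarrow> complex vec set" where
  "hspace K n = {v \<in> carrier_vec n. \<forall>k<n. v $ k \<in> K}"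

definition kspan :: "complex set \<Rightarrow> nat \<Rightarrow> (nat \<Rightarrow> complex vec) \<Rightarrow> nat set \<Rightarrow> complex vec set" where
  "kspan K n f A = {vec n (\<lambda>k. \<Sum>i\<in>A. c i * (f i $ k)) | c. \<forall>i\<in>A. c i \<in> K}"

definition is_frame :: "complex set \<Rightarrow> nat \<Rightarrow> nat \<Rightarrow> (nat \<Rightarrow> complex vec) \<Rightarrow> bool" where
  "is_frame K n N f \<longleftrightarrow> (\<forall>i<N. f i \<in> hspace K n) \<and> kspan K n f {..<N} = hspace K n"

text \<open>Analysis operator (N x n matrix): (Theta_F v)_i = <v, f_i>.\<close>
definition analysis_op :: "nat \<Rightarrow> nat \<Rightarrow> (nat \<Rightarrow> complex vec) \<Rightarrow> complex mat" where
  "analysis_op n N f = mat N n (\<lambda>(i,k). cnj (f i $ k))"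

definition synthesis_op :: "nat \<Rightarrow> nat \<Rightarrow> (nat \<Rightarrow> complex vec) \<Rightarrow> complex mat" where
  "synthesis_op n N f = mat n N (\<lambda>(k,i). f i $ k)"

definition frame_op :: "nat \<Rightarrow> nat \<Rightarrow> (nat \<Rightarrow> complex vec) \<Rightarrow> complex mat" where
  "frame_op n N f = synthesis_op n N f * analysis_op n N f"

definition inv_mat :: "nat \<Rightarrow> complex mat \<Rightarrow> complex mat" where
  "inv_mat n A = (THE B. B \<in> carrier_mat n n \<and> A * B = 1\<^sub>m n \<and> B * A = 1\<^sub>m n)"

definition inv_sqrt_mat :: "nat \<Rightarrow> complex mat \<Rightarrow> complex mat" where
  "inv_sqrt_mat n A = (THE R. R \<in> carrier_mat n n \<and> mat_adjoint R = R \<and>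
      (\<forall>v\<in>carrier_vec n. 0 \<le> Re ((R *\<^sub>v v) \<bullet>c v)) \<and> R * R = inv_mat n A)"

definition norm_sq :: "complex vec \<Rightarrow> real" where
  "norm_sq v = Re (v \<bullet>c v)"

definition is_dual_frame :: "complex set \<Rightarrow> nat \<Rightarrow> nat \<Rightarrow> (nat \<Rightarrow> complex vec) \<Rightarrow> (nat \<Rightarrow> complex vec) \<Rightarrow> bool" where
  "is_dual_frame K n N f g \<longleftrightarrow> is_frame K n N g \<and>
     (\<forall>v\<in>hspace K n.
        v = vec n (\<lambda>k. \<Sum>i<N. (v \<bullet>c f i) * (g i $ k)) \<and>
        v = vec n (\<lambda>k. \<Sum>i<N. (v \<bullet>c g i) * (f i $ k)))"

definition prob_seq :: "nat \<Rightarrow> (nat \<Rightarrow> real) \<Rightarrow> bool" where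
  "prob_seq N p \<longleftrightarrow> (\<forall>i<N. 0 \<le> p i \<and> p i \<le> 1) \<and> (\<Sum>i<N. p i) = 1"

definition weight :: "nat \<Rightarrow> nat \<Rightarrow> (nat \<Rightarrow> real) \<Rightarrow> nat \<Rightarrow> real" where
  "weight n N p i = (\<Sum>j<N. p j) / ((\<Sum>j<N. p j) - p i) * ((real N - 1) / real n)"

definition diag_one :: "nat \<Rightarrow> nat \<Rightarrow> (nat \<Rightarrow> real) \<Rightarrow> nat \<Rightarrow> complex mat" where
  "diag_one n N p i = mat N N (\<lambda>(a,b). if a = i \<and> b = i then complex_of_real (weight n N p i) else 0)"

definition D1p :: "nat \<Rightarrow> nat \<Rightarrow> (nat \<Rightarrow> real) \<Rightarrow> complex mat set" where
  "D1p n N p = diag_one n N p ` {..<N}"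

definition R1p :: "nat \<Rightarrow> nat \<Rightarrow> (nat \<Rightarrow> real) \<Rightarrow> (nat \<Rightarrow> complex vec) \<Rightarrow> (nat \<Rightarrow> complex vec) \<Rightarrow> real" where
  "R1p n N p f g = Max {spectral_radius (synthesis_op n N g * D * analysis_op n N f) | D. D \<in> D1p n N p}"

definition prob_spec_opt_dual :: "complex set \<Rightarrow> nat \<Rightarrow> nat \<Rightarrow> (nat \<Rightarrow> real) \<Rightarrow> (nat \<Rightarrow> complex vec) \<Rightarrow> (nat \<Rightarrow> complex vec) \<Rightarrow> bool" where
  "prob_spec_opt_dual K n N p f g \<longleftrightarrow> is_dual_frame K n N f g \<and>
     R1p n N p f g = Inf {R1p n N p f g' | g'. is_dual_frame K n N f g'}"

end

theory Submission
  imports Defs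
begin

text \<open>Erasing one coefficient leaves a rank-one operator, so the one-erasure spectral radius of a
  dual \<open>h\<close> is the maximum of \<open>q_i |<h_i, f_i>|\<close>. For the canonical dual
  \<open>g_i = S^-1 f_i\<close> one has \<open><g_i, f_i> = |S^-1/2 f_i|^2\<close>, so its radius is \<open>c\<close>. For any
  other dual \<open>h\<close>, the coordinates of \<open>h - g\<close> give linear relations among the \<open>f_i\<close>; since
  \<open>H_1 \<inter> H_2 = {0}\<close>, their parts over \<open>\<Upsilon>_1\<close> vanish, so \<open>h\<close> and \<open>g\<close> have the same partial
  trace \<open>\<Sum>i\<in>\<Upsilon>_1. <f_i, h_i>\<close>. Hence \<open>q_i |<h_i, f_i>| \<ge> c\<close> for some \<open>i \<in> \<Upsilon>_1\<close>.
  The matrices \<open>S^-1\<close> and \<open>S^-1/2\<close>, which are defined by uniqueness, are computed from a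
  unitary diagonalisation of the positive definite frame operator \<open>S\<close>.\<close>

section \<open>Adjoints and the complex inner product\<close>

lemma index_mult_mat_sum:
  assumes "A \<in> carrier_mat n k" "B \<in> carrier_mat k m" "i < n" "j < m"
  shows "(A * B) $$ (i,j) = (\<Sum>l<k. A $$ (i,l) * B $$ (l,j))"
  using assms unfolding lessThan_atLeast0 by (simp add: scalar_prod_def)

lemma index_mult_mat_vec_sum:
  assumes "A \<in> carrier_mat n m" "x \<in> carrier_vec m" "i < n"
  shows "(A *\<^sub>v x) $ i = (\<Sum>j<m. A $$ (i,j) * x $ j)"
  using assms unfolding lessThan_atLeast0 by (simp add: scalar_prod_def)

lemma cscalar_prod_sum:
  fixes u v :: "complex vec"
  assumes "v \<in> carrier_vec n"
  shows "u \<bullet>c v = (\<Sum>i<n. u $ i * cnj (v $ i))"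
  using assms unfolding scalar_prod_def lessThan_atLeast0 by (intro sum.cong) auto

lemma mat_adjoint_dim[simp]:
  "dim_row (mat_adjoint A) = dim_col A" "dim_col (mat_adjoint A) = dim_row A"
  unfolding mat_adjoint_def by (auto simp: mat_of_rows_def)

lemma index_mat_adjoint[simp]:
  "i < dim_col A \<Longrightarrow> j < dim_row A \<Longrightarrow> mat_adjoint (A :: complex mat) $$ (i,j) = cnj (A $$ (j,i))"
  unfolding mat_adjoint_def by (simp add: mat_of_rows_index)

lemma mat_adjoint_carrier[simp]: "A \<in> carrier_mat n m \<Longrightarrow> mat_adjoint A \<in> carrier_mat m n"
  by (intro carrier_matI) (simp_all add: carrier_matD)

lemma mat_adjoint_adjoint[simp]: "mat_adjoint (mat_adjoint (A :: complex mat)) = A"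
  by (rule eq_matI) auto

lemma mat_adjoint_one[simp]: "mat_adjoint (1\<^sub>m n :: complex mat) = 1\<^sub>m n"
  by (rule eq_matI) auto

lemma mat_adjoint_mult:
  assumes "(A :: complex mat) \<in> carrier_mat n k" "B \<in> carrier_mat k m"
  shows "mat_adjoint (A * B) = mat_adjoint B * mat_adjoint A"
  using assms by (intro eq_matI) (auto simp: scalar_prod_def cnj_sum mult.commute intro!: sum.cong)

lemma cscalar_prod_mat_adjoint:
  fixes A :: "complex mat"
  assumes A: "A \<in> carrier_mat n m" and x: "x \<in> carrier_vec m" and y: "y \<in> carrier_vec n"
  shows "(A *\<^sub>v x) \<bullet>c y = x \<bullet>c (mat_adjoint A *\<^sub>v y)"
proof -
  have "(A *\<^sub>v x) \<bullet>c y = (\<Sum>i<n. \<Sum>j<m. A $$ (i,j) * x $ j * cnj (y $ i))"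
    using A x y
    by (simp add: cscalar_prod_sum[OF y] index_mult_mat_vec_sum sum_distrib_right del: index_mult_mat_vec)
  also have "\<dots> = (\<Sum>j<m. \<Sum>i<n. A $$ (i,j) * x $ j * cnj (y $ i))"
    by (rule sum.swap)
  also have "\<dots> = x \<bullet>c (mat_adjoint A *\<^sub>v y)"
    using A x y by (simp add: cscalar_prod_sum[OF mult_mat_vec_carrier[OF mat_adjoint_carrier[OF A] y]]
        index_mult_mat_vec_sum[of _ m n] cnj_sum
        sum_distrib_left mult_ac del: index_mult_mat_vec)
  finally show ?thesis .
qed

lemma cnj_cscalar_prod:
  "u \<in> carrier_vec n \<Longrightarrow> v \<in> carrier_vec n \<Longrightarrow> cnj ((u :: complex vec) \<bullet>c v) = v \<bullet>c u"
  by (simp add: cscalar_prod_sum[of _ n] cnj_sum mult.commute)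

lemma cscalar_prod_self_eq_norm_sq: "(v :: complex vec) \<bullet>c v = complex_of_real (norm_sq v)"
  using conjugate_square_ge_0_vec[of v] unfolding norm_sq_def
  by (simp add: less_eq_complex_def complex_eq_iff)

lemma norm_sq_nonneg: "0 \<le> norm_sq v"
  using conjugate_square_ge_0_vec[of v] unfolding norm_sq_def by (simp add: less_eq_complex_def)

lemma norm_sq_eq_0_iff: "v \<in> carrier_vec n \<Longrightarrow> norm_sq v = 0 \<longleftrightarrow> v = 0\<^sub>v n"
  using conjugate_square_eq_0_vec[of v n] cscalar_prod_self_eq_norm_sq[of v] by auto

lemma cscalar_prod_smult_right:
  "u \<in> carrier_vec n \<Longrightarrow> v \<in> carrier_vec n \<Longrightarrow> u \<bullet>c (a \<cdot>\<^sub>v v) = cnj a * ((u :: complex vec) \<bullet>c v)"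
  by (simp add: conjugate_smult_vec)

lemma unit_vec_cscalar_prod:
  "v \<in> carrier_vec n \<Longrightarrow> k < n \<Longrightarrow> unit_vec n k \<bullet>c (v :: complex vec) = cnj (v $ k)"
  by (simp add: scalar_prod_left_unit[OF carrier_vec_conjugate])

lemma hermitian_congruence:
  assumes A: "A \<in> carrier_mat n n" "mat_adjoint A = A" and B: "(B :: complex mat) \<in> carrier_mat n m"
  shows "mat_adjoint (mat_adjoint B * A * B) = mat_adjoint B * A * B"
  using A B mult_carrier_mat[OF mat_adjoint_carrier[OF B] A(1)]
    assoc_mult_mat[OF mat_adjoint_carrier[OF B] A(1) B]
  by (simp add: mat_adjoint_mult[of _ m n _ m] mat_adjoint_mult[of _ m n _ n] mat_adjoint_mult[of _ n n _ m])

lemma hermitian_eigenvalue_real: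
  assumes A: "A \<in> carrier_mat n n" "mat_adjoint A = A"
    and v: "v \<in> carrier_vec n" "v \<noteq> 0\<^sub>v n" and ev: "A *\<^sub>v v = e \<cdot>\<^sub>v v"
  shows "Im e = 0"
proof -
  have "e * (v \<bullet>c v) = cnj e * (v \<bullet>c v)"
    using cscalar_prod_mat_adjoint[OF A(1) v(1) v(1)] A v ev by (simp add: cscalar_prod_smult_right)
  moreover have "v \<bullet>c v \<noteq> 0" using v by simp
  ultimately have "cnj e = e" by simp
  then show ?thesis by (metis cnj.sel(2) neg_equal_zero)
qed

section \<open>Unitary diagonalisation of Hermitian matrices\<close>

definition unitary :: "nat \<Rightarrow> complex mat \<Rightarrow> bool" where
  "unitary n U \<longleftrightarrow> U \<in> carrier_mat n n \<and> mat_adjoint U * U = 1\<^sub>m n \<and> U * mat_adjoint U = 1\<^sub>m n"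

lemma unitary_carrier: "unitary n U \<Longrightarrow> U \<in> carrier_mat n n"
  unfolding unitary_def by blast

lemma unitary_cancel_left:
  assumes "unitary n U" "X \<in> carrier_mat n n"
  shows "mat_adjoint U * (U * X) = X"
  using assms assoc_mult_mat[of "mat_adjoint U" n n U n X n] unfolding unitary_def by simp

lemma unitary_cancel_right:
  assumes "unitary n U" "X \<in> carrier_mat n n"
  shows "U * (mat_adjoint U * X) = X"
  using assms assoc_mult_mat[of U n n "mat_adjoint U" n X n] unfolding unitary_def by simp

lemma unitary_mult:
  assumes U: "unitary n U" and V: "unitary n V"
  shows "unitary n (U * V)"
proof -
  have UV: "U \<in> carrier_mat n n" "V \<in> carrier_mat n n"
    using U V by (simp_all add: unitary_carrier)
  have "mat_adjoint (U * V) * (U * V) = mat_adjoint V * (mat_adjoint U * (U * V))"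
    using UV by (simp add: mat_adjoint_mult assoc_mult_mat[of _ n n _ n _ n] mult_carrier_mat[of _ n n _ n])
  moreover have "U * V * mat_adjoint (U * V) = U * (V * (mat_adjoint V * mat_adjoint U))"
    using UV by (simp add: mat_adjoint_mult assoc_mult_mat[of _ n n _ n _ n] mult_carrier_mat[of _ n n _ n])
  ultimately show ?thesis
    using U V UV unfolding unitary_def
    by (simp add: unitary_cancel_left[OF U UV(2)] unitary_cancel_right[OF V mat_adjoint_carrier[OF UV(1)]])
qed

lemma unitary_mult_cancel_right:
  assumes U: "unitary n U" and A: "A \<in> carrier_mat n n" and B: "B \<in> carrier_mat n n"
    and eq: "A * U = B * U"
  shows "A = B"
proof -
  have "A = A * U * mat_adjoint U" and "B = B * U * mat_adjoint U"
    using U A B by (simp_all add: unitary_def assoc_mult_mat[of _ n n U n _ n])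
  then show ?thesis using eq by simp
qed

lemma unitary_col_norm:
  assumes U: "unitary n U" and i: "i < n"
  shows "col U i \<bullet>c col U i = 1"
proof -
  have Uc: "U \<in> carrier_mat n n" using U by (rule unitary_carrier)
  have u: "col U i \<in> carrier_vec n" using Uc col_dim[of U i] by simp
  have "row (mat_adjoint U) i = conjugate (col U i)" using Uc i by (intro eq_vecI) auto
  then have "col U i \<bullet>c col U i = (mat_adjoint U * U) $$ (i,i)"
    using conjugate_vec_sprod_comm[OF u u] Uc i by simp
  also have "\<dots> = 1" using U i unfolding unitary_def by simp
  finally show ?thesis .
qed

lemma unitary_normalized_cols:
  assumes ws: "set ws \<subseteq> carrier_vec n" "corthogonal ws" "length ws = n"
  shows "unitary n (mat n n (\<lambda>(i,j). ws ! j $ i / complex_of_real (sqrt (norm_sq (ws ! j)))))"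
    (is "unitary n ?W")
proof -
  define s where "s j = sqrt (norm_sq (ws ! j))" for j
  have W: "?W \<in> carrier_mat n n" by simp
  have wsc: "ws ! j \<in> carrier_vec n" if "j < n" for j
    using ws that by auto
  have s: "complex_of_real (s j) * complex_of_real (s j) = ws ! j \<bullet>c ws ! j" "s j \<noteq> 0"
    if "j < n" for j
  proof -
    have "ws ! j \<bullet>c ws ! j \<noteq> 0" using corthogonalD[OF ws(2), of j j] that ws(3) by auto
    then show "s j \<noteq> 0" by (simp add: s_def cscalar_prod_self_eq_norm_sq)
    show "complex_of_real (s j) * complex_of_real (s j) = ws ! j \<bullet>c ws ! j"
      using norm_sq_nonneg[of "ws ! j"]
      by (simp add: s_def cscalar_prod_self_eq_norm_sq flip: of_real_mult)
  qed
  have "mat_adjoint ?W * ?W = 1\<^sub>m n"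
  proof (rule eq_matI)
    fix i j assume "i < dim_row (1\<^sub>m n :: complex mat)" "j < dim_col (1\<^sub>m n :: complex mat)"
    then have i: "i < n" and j: "j < n" by auto
    have "(mat_adjoint ?W * ?W) $$ (i,j) = (\<Sum>k<n. mat_adjoint ?W $$ (i,k) * ?W $$ (k,j))"
      by (rule index_mult_mat_sum[OF mat_adjoint_carrier[OF W] W i j])
    also have "\<dots> = (ws ! j \<bullet>c ws ! i) / (complex_of_real (s i) * complex_of_real (s j))"
      using i j by (simp add: cscalar_prod_sum[OF wsc[OF i]] sum_divide_distrib s_def mult.commute)
    also have "\<dots> = 1\<^sub>m n $$ (i,j)"
      using s[OF i] corthogonalD[OF ws(2), of j i] i j ws(3) by (cases "i = j") auto
    finally show "(mat_adjoint ?W * ?W) $$ (i,j) = 1\<^sub>m n $$ (i,j)" .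
  qed simp_all
  then show ?thesis
    using W mat_mult_left_right_inverse[OF mat_adjoint_carrier[OF W] W] unfolding unitary_def by blast
qed

lemma unitary_with_first_col:
  assumes v: "v \<in> carrier_vec n" and v0: "v \<noteq> 0\<^sub>v n"
  shows "\<exists>W c. unitary n W \<and> col W 0 = c \<cdot>\<^sub>v v"
proof -
  interpret cof_vec_space n "TYPE(complex)" .
  define b where "b = basis_completion v"
  from basis_completion[OF v v0, folded b_def]
  have b: "distinct b" "\<not> lin_dep (set b)" "set b \<subseteq> carrier_vec n" "hd b = v" "length b = n"
    by auto
  have n: "n > 0" using v v0 by (cases n) auto
  then obtain vs where bv: "b = v # vs" using b(4,5) by (cases b) auto
  define ws where "ws = gram_schmidt n b"
  from gram_schmidt_result[OF b(3,1,2) ws_def]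
  have ws: "set ws \<subseteq> carrier_vec n" "corthogonal ws" "length ws = n" by (auto simp: b(5))
  have "ws ! 0 = v"
    using gram_schmidt_hd[OF v, of vs] ws(3) n unfolding ws_def bv by (cases "gram_schmidt n (v # vs)") auto
  then have "col (mat n n (\<lambda>(i,j). ws ! j $ i / complex_of_real (sqrt (norm_sq (ws ! j))))) 0 =
      (1 / complex_of_real (sqrt (norm_sq v))) \<cdot>\<^sub>v v"
    using n v by (intro eq_vecI) auto
  then show ?thesis using unitary_normalized_cols[OF ws] by blast
qed

definition unitary_diag :: "nat \<Rightarrow> complex mat \<Rightarrow> (nat \<Rightarrow> real) \<Rightarrow> complex mat" where
  "unitary_diag n U d = U * mat_diag n (\<lambda>i. complex_of_real (d i)) * mat_adjoint U"

lemma unitary_diag_carrier: "unitary n U \<Longrightarrow> unitary_diag n U d \<in> carrier_mat n n"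
  unfolding unitary_diag_def by (simp add: unitary_carrier mult_carrier_mat[of _ n n _ n])

lemma mat_adjoint_unitary_diag:
  assumes "unitary n U"
  shows "mat_adjoint (unitary_diag n U d) = unitary_diag n U d"
proof -
  have "mat_adjoint (mat_diag n (\<lambda>i. complex_of_real (d i))) = mat_diag n (\<lambda>i. complex_of_real (d i))"
    by (rule eq_matI) (auto simp: mat_diag_def)
  then show ?thesis
    using unitary_carrier[OF assms]
    by (simp add: unitary_diag_def mat_adjoint_mult[of _ n n _ n]
        assoc_mult_mat[of _ n n _ n _ n] mult_carrier_mat[of _ n n _ n])
qed

lemma unitary_diag_cong:
  assumes "\<And>i. i < n \<Longrightarrow> d i = e i"
  shows "unitary_diag n U d = unitary_diag n U e"
proof -
  have "mat_diag n (\<lambda>i. complex_of_real (d i)) = mat_diag n (\<lambda>i. complex_of_real (e i))"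
    using assms by (intro eq_matI) (auto simp: mat_diag_def)
  then show ?thesis by (simp add: unitary_diag_def)
qed

lemma unitary_diag_mult:
  assumes U: "unitary n U"
  shows "unitary_diag n U d * unitary_diag n U e = unitary_diag n U (\<lambda>i. d i * e i)"
proof -
  let ?D = "mat_diag n (\<lambda>i. complex_of_real (d i))" and ?E = "mat_diag n (\<lambda>i. complex_of_real (e i))"
  have "unitary_diag n U d * unitary_diag n U e = U * (?D * (mat_adjoint U * (U * (?E * mat_adjoint U))))"
    using unitary_carrier[OF U]
    by (simp add: unitary_diag_def assoc_mult_mat[of _ n n _ n _ n] mult_carrier_mat[of _ n n _ n])
  also have "\<dots> = U * (?D * ?E) * mat_adjoint U"
    using unitary_carrier[OF U]
    by (simp add: unitary_cancel_left[OF U] assoc_mult_mat[of _ n n _ n _ n] mult_carrier_mat[of _ n n _ n]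
        del: mat_diag_diag)
  finally show ?thesis by (simp add: unitary_diag_def)
qed

lemma unitary_diag_one:
  assumes U: "unitary n U"
  shows "unitary_diag n U (\<lambda>_. 1) = 1\<^sub>m n"
  using U right_mult_one_mat[OF unitary_carrier[OF U]] by (simp add: unitary_diag_def unitary_def)

lemma unitary_diag_mult_unitary:
  assumes U: "unitary n U"
  shows "unitary_diag n U d * U = U * mat_diag n (\<lambda>i. complex_of_real (d i))"
proof -
  let ?D = "mat_diag n (\<lambda>i. complex_of_real (d i))"
  have "unitary_diag n U d * U = U * ?D * (mat_adjoint U * U)"
    using unitary_carrier[OF U]
    by (simp add: unitary_diag_def assoc_mult_mat[of _ n n _ n _ n] mult_carrier_mat[of _ n n _ n])
  then show ?thesis
    using U right_mult_one_mat[OF mult_carrier_mat[OF unitary_carrier[OF U] mat_diag_dim]]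
    by (simp add: unitary_def)
qed

lemma unitary_diag_mult_col:
  assumes U: "unitary n U" and i: "i < n"
  shows "unitary_diag n U d *\<^sub>v col U i = complex_of_real (d i) \<cdot>\<^sub>v col U i"
proof -
  have "unitary_diag n U d *\<^sub>v col U i = col (unitary_diag n U d * U) i"
    using col_mult2[OF unitary_diag_carrier[OF U] unitary_carrier[OF U] i] by simp
  also have "\<dots> = col (U * mat_diag n (\<lambda>i. complex_of_real (d i))) i"
    by (simp add: unitary_diag_mult_unitary[OF U])
  also have "\<dots> = complex_of_real (d i) \<cdot>\<^sub>v col U i"
    using unitary_carrier[OF U] i by (intro eq_vecI) (auto simp: mat_diag_mult_right[of _ n n])
  finally show ?thesis .
qed

lemma unitary_conj_unitary_diag:
  assumes W: "unitary n W" and U: "unitary n U"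
  shows "W * unitary_diag n U d * mat_adjoint W = unitary_diag n (W * U) d"
  using unitary_carrier[OF W] unitary_carrier[OF U]
  by (simp add: unitary_diag_def mat_adjoint_mult[of _ n n _ n]
        assoc_mult_mat[of _ n n _ n _ n] mult_carrier_mat[of _ n n _ n])

lemma unitary_conj_cancel:
  assumes U: "unitary n U" and A: "A \<in> carrier_mat n n"
  shows "U * (mat_adjoint U * A * U) * mat_adjoint U = A"
proof -
  have "U * (mat_adjoint U * A * U) * mat_adjoint U = (U * mat_adjoint U) * A * (U * mat_adjoint U)"
    using unitary_carrier[OF U] A
    by (simp add: assoc_mult_mat[of _ n n _ n _ n] mult_carrier_mat[of _ n n _ n])
  then show ?thesis using U A by (simp add: unitary_def)
qed

definition diag_block_mat :: "nat \<Rightarrow> complex \<Rightarrow> complex mat \<Rightarrow> complex mat" where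
  "diag_block_mat m a X = mat (Suc m) (Suc m)
     (\<lambda>(i,j). if i = 0 \<and> j = 0 then a else if i = 0 \<or> j = 0 then 0 else X $$ (i - 1, j - 1))"

lemma diag_block_mat_carrier[simp]: "diag_block_mat m a X \<in> carrier_mat (Suc m) (Suc m)"
  unfolding diag_block_mat_def by auto

lemma diag_block_mat_mult:
  assumes X: "X \<in> carrier_mat m m" and Y: "Y \<in> carrier_mat m m"
  shows "diag_block_mat m a X * diag_block_mat m b Y = diag_block_mat m (a * b) (X * Y)"
proof (rule eq_matI)
  fix i j assume "i < dim_row (diag_block_mat m (a * b) (X * Y))"
    and "j < dim_col (diag_block_mat m (a * b) (X * Y))"
  then have i: "i < Suc m" and j: "j < Suc m" by (auto simp: diag_block_mat_def)
  have "(diag_block_mat m a X * diag_block_mat m b Y) $$ (i,j) =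
      diag_block_mat m a X $$ (i,0) * diag_block_mat m b Y $$ (0,j) +
      (\<Sum>l<m. diag_block_mat m a X $$ (i,Suc l) * diag_block_mat m b Y $$ (Suc l,j))"
    unfolding index_mult_mat_sum[OF diag_block_mat_carrier diag_block_mat_carrier i j]
    by (rule sum.lessThan_Suc_shift)
  also have "\<dots> = diag_block_mat m (a * b) (X * Y) $$ (i,j)"
    using i j X Y
    by (cases i; cases j) (auto simp: diag_block_mat_def scalar_prod_def lessThan_atLeast0 intro!: sum.cong)
  finally show "(diag_block_mat m a X * diag_block_mat m b Y) $$ (i,j) =
    diag_block_mat m (a * b) (X * Y) $$ (i,j)" .
qed (auto simp: diag_block_mat_def)

lemma mat_adjoint_diag_block_mat:
  "X \<in> carrier_mat m m \<Longrightarrow> mat_adjoint (diag_block_mat m a X) = diag_block_mat m (cnj a) (mat_adjoint X)"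
  by (rule eq_matI) (auto simp: diag_block_mat_def)

lemma unitary_diag_block_mat:
  assumes U: "unitary m U"
  shows "unitary (Suc m) (diag_block_mat m 1 U)"
proof -
  have "diag_block_mat m 1 (1\<^sub>m m) = 1\<^sub>m (Suc m)"
    by (rule eq_matI) (auto simp: diag_block_mat_def)
  then show ?thesis
    using U unitary_carrier[OF U]
    by (simp add: unitary_def mat_adjoint_diag_block_mat diag_block_mat_mult)
qed

lemma diag_block_mat_mat_diag:
  "diag_block_mat m a (mat_diag m d) = mat_diag (Suc m) (\<lambda>i. if i = 0 then a else d (i - 1))"
  by (rule eq_matI) (auto simp: diag_block_mat_def mat_diag_def)

lemma hermitian_diag_block_mat:
  assumes A: "A \<in> carrier_mat (Suc m) (Suc m)" "mat_adjoint A = A"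
    and col0: "col A 0 = e \<cdot>\<^sub>v unit_vec (Suc m) 0"
  shows "\<exists>X. X \<in> carrier_mat m m \<and> mat_adjoint X = X \<and> A = diag_block_mat m e X"
proof -
  define X where "X = mat m m (\<lambda>(i,j). A $$ (Suc i, Suc j))"
  have adj: "A $$ (i,j) = cnj (A $$ (j,i))" if "i < Suc m" "j < Suc m" for i j
    using arg_cong[OF A(2), of "\<lambda>B. B $$ (i,j)"] A(1) that by simp
  have col: "A $$ (i,0) = (if i = 0 then e else 0)" if "i < Suc m" for i
    using arg_cong[OF col0, of "\<lambda>v. v $ i"] A(1) that by auto
  have row: "A $$ (0,j) = (if j = 0 then e else 0)" if "j < Suc m" for j
  proof (cases "j = 0")
    case True
    then show ?thesis using col[of 0] by simp
  next
    case False
    then show ?thesis using adj[of 0 j] col[of j] that by simp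
  qed
  have "mat_adjoint X = X"
  proof (rule eq_matI)
    fix i j assume "i < dim_row X" "j < dim_col X"
    then show "mat_adjoint X $$ (i,j) = X $$ (i,j)"
      using adj[of "Suc i" "Suc j"] by (simp add: X_def)
  qed (simp_all add: X_def)
  moreover have "A = diag_block_mat m e X"
    using A(1) col row by (intro eq_matI) (auto simp: diag_block_mat_def X_def)
  moreover have "X \<in> carrier_mat m m" by (simp add: X_def)
  ultimately show ?thesis by blast
qed

lemma diag_block_mat_unitary_diag:
  assumes U: "unitary m U"
  shows "diag_block_mat m (complex_of_real e) (unitary_diag m U d) =
    unitary_diag (Suc m) (diag_block_mat m 1 U) (\<lambda>i. if i = 0 then e else d (i - 1))"
proof -
  have Uc: "U \<in> carrier_mat m m" using U by (rule unitary_carrier)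
  have D: "mat_diag (Suc m) (\<lambda>i. complex_of_real (if i = 0 then e else d (i - 1))) =
      diag_block_mat m (complex_of_real e) (mat_diag m (\<lambda>i. complex_of_real (d i)))"
    unfolding diag_block_mat_mat_diag by (intro arg_cong[where f = "mat_diag (Suc m)"] ext) simp
  show ?thesis
    unfolding unitary_diag_def D using Uc
    by (simp add: mat_adjoint_diag_block_mat diag_block_mat_mult mult_carrier_mat[of _ m m _ m])
qed

text \<open>Conjugating by a unitary matrix whose first column is an eigenvector splits off the
  (real) eigenvalue.\<close>

lemma hermitian_deflation:
  assumes A: "A \<in> carrier_mat (Suc m) (Suc m)" "mat_adjoint A = A"
  shows "\<exists>W e X. unitary (Suc m) W \<and> X \<in> carrier_mat m m \<and> mat_adjoint X = X \<and>
    A = W * diag_block_mat m (complex_of_real e) X * mat_adjoint W"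
proof -
  obtain e v where v: "v \<in> carrier_vec (Suc m)" "v \<noteq> 0\<^sub>v (Suc m)" and ev: "A *\<^sub>v v = e \<cdot>\<^sub>v v"
    using spectrum_non_empty[OF A(1)] A(1) unfolding spectrum_def eigenvalue_def eigenvector_def by auto
  obtain W c where W: "unitary (Suc m) W" and W0: "col W 0 = c \<cdot>\<^sub>v v"
    using unitary_with_first_col[OF v] by blast
  have Wc: "W \<in> carrier_mat (Suc m) (Suc m)" using W by (rule unitary_carrier)
  define A' where "A' = mat_adjoint W * A * W"
  have WA: "mat_adjoint W * A \<in> carrier_mat (Suc m) (Suc m)"
    using mult_carrier_mat[OF mat_adjoint_carrier[OF Wc] A(1)] .
  have A': "A' \<in> carrier_mat (Suc m) (Suc m)" "mat_adjoint A' = A'"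
    unfolding A'_def using mult_carrier_mat[OF WA Wc] hermitian_congruence[OF A Wc] by simp_all
  have "col A' 0 = (mat_adjoint W * A) *\<^sub>v col W 0"
    unfolding A'_def by (rule col_mult2[OF WA Wc]) simp
  also have "\<dots> = mat_adjoint W *\<^sub>v (A *\<^sub>v col W 0)"
    using Wc col_dim[of W 0] by (intro assoc_mult_mat_vec[OF mat_adjoint_carrier[OF Wc] A(1)]) simp
  also have "A *\<^sub>v col W 0 = e \<cdot>\<^sub>v col W 0"
    using v by (simp add: W0 mult_mat_vec[OF A(1) v(1)] ev) (intro eq_vecI; simp)
  also have "mat_adjoint W *\<^sub>v (e \<cdot>\<^sub>v col W 0) = e \<cdot>\<^sub>v col (mat_adjoint W * W) 0"
    using Wc col_dim[of W 0] col_mult2[OF mat_adjoint_carrier[OF Wc] Wc, of 0]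
    by (simp add: mult_mat_vec[OF mat_adjoint_carrier[OF Wc]])
  finally have "col A' 0 = e \<cdot>\<^sub>v unit_vec (Suc m) 0"
    using W by (simp add: unitary_def)
  then obtain X where X: "X \<in> carrier_mat m m" "mat_adjoint X = X" and A'X: "A' = diag_block_mat m e X"
    using hermitian_diag_block_mat[OF A'] by blast
  have "complex_of_real (Re e) = e"
    using hermitian_eigenvalue_real[OF A v ev] by (simp add: complex_eq_iff)
  moreover have "A = W * A' * mat_adjoint W"
    unfolding A'_def by (rule unitary_conj_cancel[OF W A(1), symmetric])
  ultimately show ?thesis using W X A'X by metis
qed

theorem hermitian_unitary_diag:
  assumes "A \<in> carrier_mat n n" "mat_adjoint A = A"
  shows "\<exists>U d. unitary n U \<and> A = unitary_diag n U d"
  using assms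
proof (induction n arbitrary: A)
  case 0
  then have "A = unitary_diag 0 (1\<^sub>m 0) (\<lambda>_. 0)"
    by (intro eq_matI) (auto simp: unitary_diag_def)
  moreover have "unitary 0 (1\<^sub>m 0)" by (simp add: unitary_def)
  ultimately show ?case by blast
next
  case (Suc m)
  obtain W e X where W: "unitary (Suc m) W" and X: "X \<in> carrier_mat m m" "mat_adjoint X = X"
    and A: "A = W * diag_block_mat m (complex_of_real e) X * mat_adjoint W"
    using hermitian_deflation[OF Suc.prems] by blast
  obtain U d where U: "unitary m U" and Xd: "X = unitary_diag m U d"
    using Suc.IH[OF X] by blast
  let ?B = "diag_block_mat m 1 U" and ?d = "\<lambda>i. if i = 0 then e else d (i - 1)"
  have B: "unitary (Suc m) ?B" by (rule unitary_diag_block_mat[OF U])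
  have "A = unitary_diag (Suc m) (W * ?B) ?d"
    unfolding A Xd diag_block_mat_unitary_diag[OF U] by (rule unitary_conj_unitary_diag[OF W B])
  then show ?case using unitary_mult[OF W B] by blast
qed

section \<open>Square roots and inverses of positive definite matrices\<close>

definition positive_semidef :: "nat \<Rightarrow> complex mat \<Rightarrow> bool" where
  "positive_semidef n A \<longleftrightarrow> (\<forall>v\<in>carrier_vec n. 0 \<le> Re ((A *\<^sub>v v) \<bullet>c v))"

lemma positive_semidef_unitary_diag:
  assumes U: "unitary n U" and d: "\<And>i. i < n \<Longrightarrow> 0 \<le> d i"
  shows "positive_semidef n (unitary_diag n U d)"
  unfolding positive_semidef_def
proof
  fix x :: "complex vec" assume x: "x \<in> carrier_vec n"
  define R where "R = unitary_diag n U (\<lambda>i. sqrt (d i))"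
  have R: "R \<in> carrier_mat n n" "mat_adjoint R = R"
    unfolding R_def using U by (simp_all add: unitary_diag_carrier mat_adjoint_unitary_diag)
  have "unitary_diag n U d = unitary_diag n U (\<lambda>i. sqrt (d i) * sqrt (d i))"
    using d by (intro unitary_diag_cong) simp
  also have "\<dots> = R * R" by (simp add: R_def unitary_diag_mult[OF U])
  finally have "unitary_diag n U d = R * R" .
  then have "(unitary_diag n U d *\<^sub>v x) \<bullet>c x = (R *\<^sub>v x) \<bullet>c (R *\<^sub>v x)"
    using cscalar_prod_mat_adjoint[OF R(1) mult_mat_vec_carrier[OF R(1) x] x] R x by simp
  then show "0 \<le> Re ((unitary_diag n U d *\<^sub>v x) \<bullet>c x)"
    using norm_sq_nonneg by (simp add: norm_sq_def)
qed

text \<open>Since \<open>T + s\<close> is positive definite, \<open>(T + s) (T u - s u) = T\<^sup>2 u - s\<^sup>2 u = 0\<close> forces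
  \<open>T u = s u\<close>.\<close>

lemma positive_semidef_sqrt_eigenvector:
  assumes T: "T \<in> carrier_mat n n" "positive_semidef n T" and u: "u \<in> carrier_vec n"
    and s: "0 < s" and TTu: "T *\<^sub>v (T *\<^sub>v u) = complex_of_real (s\<^sup>2) \<cdot>\<^sub>v u"
  shows "T *\<^sub>v u = complex_of_real s \<cdot>\<^sub>v u"
proof -
  let ?s = "complex_of_real s"
  define y where "y = T *\<^sub>v u - ?s \<cdot>\<^sub>v u"
  have Tu: "T *\<^sub>v u \<in> carrier_vec n" using T u by simp
  have y: "y \<in> carrier_vec n" using Tu u by (simp add: y_def)
  have Ty: "T *\<^sub>v y = complex_of_real (s\<^sup>2) \<cdot>\<^sub>v u - ?s \<cdot>\<^sub>v (T *\<^sub>v u)"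
    unfolding y_def using T u Tu
    by (simp add: mult_minus_distrib_mat_vec[OF T(1) Tu] mult_mat_vec[OF T(1) u] TTu)
  have "T *\<^sub>v y + ?s \<cdot>\<^sub>v y = 0\<^sub>v n"
    using u Tu carrier_vecD[OF u] carrier_vecD[OF Tu]
    by (subst Ty, unfold y_def) (intro eq_vecI; simp add: algebra_simps power2_eq_square)
  then have "0 = (T *\<^sub>v y + ?s \<cdot>\<^sub>v y) \<bullet>c y"
    using y by simp
  also have "\<dots> = (T *\<^sub>v y) \<bullet>c y + complex_of_real (s * norm_sq y)"
    using T y by (simp add: add_scalar_prod_distrib[of _ n] cscalar_prod_self_eq_norm_sq)
  finally have "(T *\<^sub>v y) \<bullet>c y + complex_of_real (s * norm_sq y) = 0"
    by simp
  then have "Re ((T *\<^sub>v y) \<bullet>c y) + s * norm_sq y = 0"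
    by (metis Re_complex_of_real plus_complex.sel(1) zero_complex.sel(1))
  moreover have "0 \<le> Re ((T *\<^sub>v y) \<bullet>c y)" using T(2) y by (simp add: positive_semidef_def)
  ultimately have "norm_sq y = 0"
    using s norm_sq_nonneg[of y] by (smt (verit) mult_pos_pos)
  then have y0: "y = 0\<^sub>v n" using norm_sq_eq_0_iff[OF y] by simp
  show ?thesis
  proof (rule eq_vecI)
    fix k assume "k < dim_vec (?s \<cdot>\<^sub>v u)"
    then have k: "k < n" using u by simp
    then have "y $ k = 0" using y0 by simp
    then show "(T *\<^sub>v u) $ k = (?s \<cdot>\<^sub>v u) $ k" using k u Tu by (simp add: y_def)
  qed (use T(1) u in simp)
qed

lemma positive_semidef_sqrt_unitary_diag:
  assumes U: "unitary n U" and d: "\<And>i. i < n \<Longrightarrow> 0 < d i"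
    and T: "T \<in> carrier_mat n n" "positive_semidef n T" and TT: "T * T = unitary_diag n U d"
  shows "T = unitary_diag n U (\<lambda>i. sqrt (d i))"
proof (rule unitary_mult_cancel_right[OF U T(1) unitary_diag_carrier[OF U]])
  have Uc: "U \<in> carrier_mat n n" using U by (rule unitary_carrier)
  show "T * U = unitary_diag n U (\<lambda>i. sqrt (d i)) * U"
  proof (rule mat_col_eqI)
    fix i assume "i < dim_col (unitary_diag n U (\<lambda>i. sqrt (d i)) * U)"
    then have i: "i < n" using Uc by simp
    have u: "col U i \<in> carrier_vec n" using Uc col_dim[of U i] by simp
    have TTu: "T *\<^sub>v (T *\<^sub>v col U i) = complex_of_real ((sqrt (d i))\<^sup>2) \<cdot>\<^sub>v col U i"
      using TT unitary_diag_mult_col[OF U i, of d] d[OF i] T(1) u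
      by (simp flip: assoc_mult_mat_vec[OF T(1) T(1) u])
    have "T *\<^sub>v col U i = complex_of_real (sqrt (d i)) \<cdot>\<^sub>v col U i"
      using positive_semidef_sqrt_eigenvector[OF T u _ TTu] d[OF i] by simp
    then show "col (T * U) i = col (unitary_diag n U (\<lambda>i. sqrt (d i)) * U) i"
      using unitary_diag_mult_col[OF U i, of "\<lambda>i. sqrt (d i)"]
        col_mult2[OF T(1) Uc i] col_mult2[OF unitary_diag_carrier[OF U] Uc i] by simp
  qed (use T(1) Uc carrier_matD[OF unitary_diag_carrier[OF U]] in simp_all)
qed

lemma inv_mat_eqI:
  assumes A: "A \<in> carrier_mat n n" and B: "B \<in> carrier_mat n n"
    and AB: "A * B = 1\<^sub>m n" and BA: "B * A = 1\<^sub>m n"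
  shows "inv_mat n A = B"
  unfolding inv_mat_def
proof (rule the_equality)
  fix B' assume "B' \<in> carrier_mat n n \<and> A * B' = 1\<^sub>m n \<and> B' * A = 1\<^sub>m n"
  then have B': "B' \<in> carrier_mat n n" "B' * A = 1\<^sub>m n" by simp_all
  have "B' = B' * (A * B)" using B' by (simp add: AB)
  also have "\<dots> = (B' * A) * B" by (rule assoc_mult_mat[OF B'(1) A B, symmetric])
  finally show "B' = B" using B B' by simp
qed (use A B AB BA in simp)

lemma unitary_diag_inverse:
  assumes U: "unitary n U" and d: "\<And>i. i < n \<Longrightarrow> d i \<noteq> 0"
  shows "unitary_diag n U d * unitary_diag n U (\<lambda>i. 1 / d i) = 1\<^sub>m n"
    and "unitary_diag n U (\<lambda>i. 1 / d i) * unitary_diag n U d = 1\<^sub>m n"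
proof -
  have "unitary_diag n U (\<lambda>i. d i * (1 / d i)) = unitary_diag n U (\<lambda>_. 1)"
    "unitary_diag n U (\<lambda>i. 1 / d i * d i) = unitary_diag n U (\<lambda>_. 1)"
    using d by (intro unitary_diag_cong; simp)+
  then show "unitary_diag n U d * unitary_diag n U (\<lambda>i. 1 / d i) = 1\<^sub>m n"
    "unitary_diag n U (\<lambda>i. 1 / d i) * unitary_diag n U d = 1\<^sub>m n"
    by (simp_all only: unitary_diag_mult[OF U] unitary_diag_one[OF U])
qed

lemma inv_mat_unitary_diag:
  assumes U: "unitary n U" and d: "\<And>i. i < n \<Longrightarrow> d i \<noteq> 0"
  shows "inv_mat n (unitary_diag n U d) = unitary_diag n U (\<lambda>i. 1 / d i)"
  using unitary_diag_inverse[OF U d]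
  by (intro inv_mat_eqI[OF unitary_diag_carrier[OF U] unitary_diag_carrier[OF U]])

lemma inv_sqrt_mat_unitary_diag:
  assumes U: "unitary n U" and d: "\<And>i. i < n \<Longrightarrow> 0 < d i"
  shows "inv_sqrt_mat n (unitary_diag n U d) = unitary_diag n U (\<lambda>i. 1 / sqrt (d i))"
  unfolding inv_sqrt_mat_def
proof (rule the_equality, intro conjI)
  have inv: "inv_mat n (unitary_diag n U d) = unitary_diag n U (\<lambda>i. 1 / d i)"
    using d by (intro inv_mat_unitary_diag[OF U]) (metis less_irrefl)
  let ?R = "unitary_diag n U (\<lambda>i. 1 / sqrt (d i))"
  show "?R \<in> carrier_mat n n" "mat_adjoint ?R = ?R"
    by (simp_all add: unitary_diag_carrier[OF U] mat_adjoint_unitary_diag[OF U])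
  show "\<forall>v\<in>carrier_vec n. 0 \<le> Re ((?R *\<^sub>v v) \<bullet>c v)"
    using positive_semidef_unitary_diag[OF U, of "\<lambda>i. 1 / sqrt (d i)"] d
    by (simp add: positive_semidef_def less_imp_le)
  have "unitary_diag n U (\<lambda>i. 1 / sqrt (d i) * (1 / sqrt (d i))) = unitary_diag n U (\<lambda>i. 1 / d i)"
    using d by (intro unitary_diag_cong) (simp add: less_imp_le)
  then show "?R * ?R = inv_mat n (unitary_diag n U d)"
    by (simp add: inv unitary_diag_mult[OF U])
  fix T assume "T \<in> carrier_mat n n \<and> mat_adjoint T = T \<and> (\<forall>v\<in>carrier_vec n. 0 \<le> Re ((T *\<^sub>v v) \<bullet>c v))
    \<and> T * T = inv_mat n (unitary_diag n U d)"
  then have "T = unitary_diag n U (\<lambda>i. sqrt (1 / d i))"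
    using d by (intro positive_semidef_sqrt_unitary_diag[OF U]) (auto simp: positive_semidef_def inv)
  then show "T = ?R" by (simp add: real_sqrt_divide)
qed

lemma positive_def_unitary_diag:
  assumes A: "A \<in> carrier_mat n n" "mat_adjoint A = A"
    and pd: "\<And>v. v \<in> carrier_vec n \<Longrightarrow> v \<noteq> 0\<^sub>v n \<Longrightarrow> 0 < Re ((A *\<^sub>v v) \<bullet>c v)"
  shows "\<exists>U d. unitary n U \<and> (\<forall>i<n. 0 < d i) \<and> A = unitary_diag n U d"
proof -
  obtain U d where U: "unitary n U" and Ad: "A = unitary_diag n U d"
    using hermitian_unitary_diag[OF A] by blast
  have "0 < d i" if i: "i < n" for i
  proof -
    have u: "col U i \<in> carrier_vec n" using unitary_carrier[OF U] col_dim[of U i] by simp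
    have "col U i \<noteq> 0\<^sub>v n" using unitary_col_norm[OF U i] u by auto
    then have "0 < Re ((A *\<^sub>v col U i) \<bullet>c col U i)" using pd u by blast
    then show ?thesis using u by (simp add: Ad unitary_diag_mult_col[OF U i] unitary_col_norm[OF U i])
  qed
  then show ?thesis using U Ad by blast
qed

section \<open>Analysis, synthesis and frame operators\<close>

lemma synthesis_op_dim[simp]:
  "dim_row (synthesis_op n N f) = n" "dim_col (synthesis_op n N f) = N"
  unfolding synthesis_op_def by simp_all

lemma analysis_op_dim[simp]:
  "dim_row (analysis_op n N f) = N" "dim_col (analysis_op n N f) = n"
  unfolding analysis_op_def by simp_all

lemma synthesis_op_carrier[simp]: "synthesis_op n N f \<in> carrier_mat n N"
  by (simp add: carrier_matI)

lemma analysis_op_carrier[simp]: "analysis_op n N f \<in> carrier_mat N n"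
  by (simp add: carrier_matI)

lemma frame_op_carrier[simp]: "frame_op n N f \<in> carrier_mat n n"
  unfolding frame_op_def by (rule mult_carrier_mat[OF synthesis_op_carrier analysis_op_carrier])

lemma mat_adjoint_synthesis_op: "mat_adjoint (synthesis_op n N f) = analysis_op n N f"
  by (rule eq_matI) (auto simp: synthesis_op_def analysis_op_def)

lemma mat_adjoint_analysis_op: "mat_adjoint (analysis_op n N f) = synthesis_op n N f"
  by (rule eq_matI) (auto simp: synthesis_op_def analysis_op_def)

lemma mat_adjoint_frame_op: "mat_adjoint (frame_op n N f) = frame_op n N f"
  by (simp add: frame_op_def mat_adjoint_mult[OF synthesis_op_carrier analysis_op_carrier]
      mat_adjoint_synthesis_op mat_adjoint_analysis_op)

lemma analysis_op_mult_vec: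
  assumes f: "\<And>i. i < N \<Longrightarrow> f i \<in> carrier_vec n" and v: "v \<in> carrier_vec n"
  shows "analysis_op n N f *\<^sub>v v = vec N (\<lambda>i. v \<bullet>c f i)"
proof (rule eq_vecI)
  fix i assume "i < dim_vec (vec N (\<lambda>i. v \<bullet>c f i))"
  then have i: "i < N" by simp
  have "(analysis_op n N f *\<^sub>v v) $ i = (\<Sum>k<n. analysis_op n N f $$ (i,k) * v $ k)"
    by (rule index_mult_mat_vec_sum[OF analysis_op_carrier v i])
  also have "\<dots> = v \<bullet>c f i"
    using i by (simp add: analysis_op_def cscalar_prod_sum[OF f[OF i]] mult.commute)
  finally show "(analysis_op n N f *\<^sub>v v) $ i = vec N (\<lambda>i. v \<bullet>c f i) $ i" using i by simp
qed simp

lemma synthesis_op_mult_vec: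
  assumes c: "c \<in> carrier_vec N"
  shows "synthesis_op n N h *\<^sub>v c = vec n (\<lambda>k. \<Sum>i<N. c $ i * h i $ k)"
proof (rule eq_vecI)
  fix k assume "k < dim_vec (vec n (\<lambda>k. \<Sum>i<N. c $ i * h i $ k))"
  then have k: "k < n" by simp
  have "(synthesis_op n N h *\<^sub>v c) $ k = (\<Sum>i<N. synthesis_op n N h $$ (k,i) * c $ i)"
    by (rule index_mult_mat_vec_sum[OF synthesis_op_carrier c k])
  then show "(synthesis_op n N h *\<^sub>v c) $ k = vec n (\<lambda>k. \<Sum>i<N. c $ i * h i $ k) $ k"
    using k by (simp add: synthesis_op_def mult.commute)
qed simp

lemma synthesis_analysis_mult_vec:
  assumes f: "\<And>i. i < N \<Longrightarrow> f i \<in> carrier_vec n" and v: "v \<in> carrier_vec n"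
  shows "synthesis_op n N h *\<^sub>v (analysis_op n N f *\<^sub>v v) = vec n (\<lambda>k. \<Sum>i<N. (v \<bullet>c f i) * h i $ k)"
  by (simp add: analysis_op_mult_vec[OF f v] synthesis_op_mult_vec)

lemma synthesis_op_mult:
  assumes f: "\<And>i. i < N \<Longrightarrow> f i \<in> carrier_vec n" and B: "B \<in> carrier_mat n n"
  shows "synthesis_op n N (\<lambda>i. B *\<^sub>v f i) = B * synthesis_op n N f"
proof (rule eq_matI)
  fix k i assume "k < dim_row (B * synthesis_op n N f)" "i < dim_col (B * synthesis_op n N f)"
  then have k: "k < n" and i: "i < N" using B by auto
  have "(B * synthesis_op n N f) $$ (k,i) = (\<Sum>l<n. B $$ (k,l) * synthesis_op n N f $$ (l,i))"
    by (rule index_mult_mat_sum[OF B synthesis_op_carrier k i])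
  also have "\<dots> = (B *\<^sub>v f i) $ k"
    using k i by (simp add: index_mult_mat_vec_sum[OF B f[OF i] k] synthesis_op_def)
  finally show "synthesis_op n N (\<lambda>i. B *\<^sub>v f i) $$ (k,i) = (B * synthesis_op n N f) $$ (k,i)"
    using k i by (simp add: synthesis_op_def)
qed (use B in auto)

lemma analysis_op_mult:
  assumes f: "\<And>i. i < N \<Longrightarrow> f i \<in> carrier_vec n" and B: "B \<in> carrier_mat n n"
  shows "analysis_op n N (\<lambda>i. B *\<^sub>v f i) = analysis_op n N f * mat_adjoint B"
proof -
  have "analysis_op n N (\<lambda>i. B *\<^sub>v f i) = mat_adjoint (B * synthesis_op n N f)"
    by (simp add: synthesis_op_mult[OF f B, symmetric] mat_adjoint_synthesis_op)
  also have "\<dots> = analysis_op n N f * mat_adjoint B"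
    by (simp add: mat_adjoint_mult[OF B synthesis_op_carrier] mat_adjoint_synthesis_op)
  finally show ?thesis .
qed

lemma frame_op_cscalar_prod:
  assumes v: "v \<in> carrier_vec n"
  shows "(frame_op n N f *\<^sub>v v) \<bullet>c v = complex_of_real (norm_sq (analysis_op n N f *\<^sub>v v))"
proof -
  have Av: "analysis_op n N f *\<^sub>v v \<in> carrier_vec N"
    using mult_mat_vec_carrier[OF analysis_op_carrier v] .
  have "frame_op n N f *\<^sub>v v = synthesis_op n N f *\<^sub>v (analysis_op n N f *\<^sub>v v)"
    unfolding frame_op_def by (rule assoc_mult_mat_vec[OF synthesis_op_carrier analysis_op_carrier v])
  then show ?thesis
    using cscalar_prod_mat_adjoint[OF synthesis_op_carrier Av v]
    by (simp add: mat_adjoint_synthesis_op cscalar_prod_self_eq_norm_sq)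
qed

lemma mult_mat_vec_conjugate:
  assumes A: "A \<in> carrier_mat n m" and real: "\<And>k l. k < n \<Longrightarrow> l < m \<Longrightarrow> cnj (A $$ (k,l)) = A $$ (k,l)"
    and w: "w \<in> carrier_vec m"
  shows "A *\<^sub>v conjugate w = conjugate (A *\<^sub>v w)"
  using A w real
  by (intro eq_vecI) (simp_all add: index_mult_mat_vec_sum[OF A] cnj_sum del: index_mult_mat_vec)

lemma cnj_frame_op:
  assumes real: "\<And>j k. j < N \<Longrightarrow> k < n \<Longrightarrow> cnj (f j $ k) = f j $ k" and kl: "k < n" "l < n"
  shows "cnj (frame_op n N f $$ (k,l)) = frame_op n N f $$ (k,l)"
proof -
  have S: "frame_op n N f $$ (k,l) = (\<Sum>j<N. synthesis_op n N f $$ (k,j) * analysis_op n N f $$ (j,l))"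
    unfolding frame_op_def by (rule index_mult_mat_sum[OF synthesis_op_carrier analysis_op_carrier kl])
  have "cnj (frame_op n N f $$ (k,l)) = (\<Sum>j<N. cnj (f j $ k) * f j $ l)"
    using kl by (simp add: S synthesis_op_def analysis_op_def cnj_sum)
  also have "\<dots> = (\<Sum>j<N. f j $ k * cnj (f j $ l))"
    using kl by (intro sum.cong refl) (simp add: real)
  also have "\<dots> = frame_op n N f $$ (k,l)"
    using kl by (simp add: S synthesis_op_def analysis_op_def)
  finally show ?thesis .
qed

section \<open>One-erasure spectral radii\<close>

definition outer_prod :: "nat \<Rightarrow> complex vec \<Rightarrow> complex vec \<Rightarrow> complex mat" where
  "outer_prod n x y = mat n n (\<lambda>(k,l). x $ k * cnj (y $ l))"

lemma outer_prod_dim[simp]: "dim_row (outer_prod n x y) = n" "dim_col (outer_prod n x y) = n"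
  unfolding outer_prod_def by simp_all

lemma outer_prod_carrier: "outer_prod n x y \<in> carrier_mat n n"
  by (simp add: carrier_matI)

lemma outer_prod_mult_vec:
  assumes x: "x \<in> carrier_vec n" and y: "y \<in> carrier_vec n" and v: "v \<in> carrier_vec n"
  shows "outer_prod n x y *\<^sub>v v = (v \<bullet>c y) \<cdot>\<^sub>v x"
proof (rule eq_vecI)
  fix k assume "k < dim_vec ((v \<bullet>c y) \<cdot>\<^sub>v x)"
  then have k: "k < n" using x by simp
  have "(outer_prod n x y *\<^sub>v v) $ k = (\<Sum>l<n. outer_prod n x y $$ (k,l) * v $ l)"
    by (rule index_mult_mat_vec_sum[OF outer_prod_carrier v k])
  then show "(outer_prod n x y *\<^sub>v v) $ k = ((v \<bullet>c y) \<cdot>\<^sub>v x) $ k"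
    using k x by (simp add: outer_prod_def cscalar_prod_sum[OF y] sum_distrib_left mult_ac)
qed (use x outer_prod_carrier[of n x y] in simp)

lemma spectrum_outer_prod:
  assumes x: "x \<in> carrier_vec n" and y: "y \<in> carrier_vec n" and \<mu>: "\<mu> \<in> spectrum (outer_prod n x y)"
  shows "\<mu> = 0 \<or> \<mu> = x \<bullet>c y"
proof -
  obtain v where v: "v \<in> carrier_vec n" "v \<noteq> 0\<^sub>v n" and ev: "outer_prod n x y *\<^sub>v v = \<mu> \<cdot>\<^sub>v v"
    using \<mu> outer_prod_carrier[of n x y] unfolding spectrum_def eigenvalue_def eigenvector_def by auto
  have eq: "(v \<bullet>c y) \<cdot>\<^sub>v x = \<mu> \<cdot>\<^sub>v v" using ev outer_prod_mult_vec[OF x y v(1)] by simp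
  have "(v \<bullet>c y) * (x \<bullet>c y) = \<mu> * (v \<bullet>c y)"
    using arg_cong[OF eq, of "\<lambda>w. w \<bullet>c y"] x y v(1) by simp
  moreover have "\<mu> = 0" if vy: "v \<bullet>c y = 0"
  proof -
    obtain k where k: "k < n" "v $ k \<noteq> 0" using v by (auto simp: vec_eq_iff)
    have "\<mu> * v $ k = 0" using arg_cong[OF eq, of "\<lambda>w. w $ k"] vy x v(1) k by simp
    then show ?thesis using k by simp
  qed
  ultimately show ?thesis by (metis mult.commute mult_cancel_left)
qed

lemma spectral_radius_outer_prod:
  assumes n: "0 < n" and x: "x \<in> carrier_vec n" and y: "y \<in> carrier_vec n"
  shows "spectral_radius (outer_prod n x y) = cmod (x \<bullet>c y)"
proof -
  note M = outer_prod_carrier[of n x y]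
  obtain \<mu> where \<mu>: "\<mu> \<in> spectrum (outer_prod n x y)" "spectral_radius (outer_prod n x y) = cmod \<mu>"
    using spectral_radius_mem_max(1)[OF M n] by auto
  have "spectral_radius (outer_prod n x y) \<le> cmod (x \<bullet>c y)"
    using spectrum_outer_prod[OF x y \<mu>(1)] \<mu>(2) by auto
  moreover have "cmod (x \<bullet>c y) \<le> spectral_radius (outer_prod n x y)"
  proof (cases "x \<bullet>c y = 0")
    case True
    then show ?thesis using \<mu>(2) by simp
  next
    case False
    then have "x \<noteq> 0\<^sub>v n" using y by auto
    then have "x \<bullet>c y \<in> spectrum (outer_prod n x y)"
      using M x outer_prod_mult_vec[OF x y x] unfolding spectrum_def eigenvalue_def eigenvector_def by auto
    then show ?thesis using spectral_radius_mem_max(2)[OF M n] by auto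
  qed
  ultimately show ?thesis by simp
qed

lemma synthesis_diag_one_analysis:
  assumes h: "h i \<in> carrier_vec n" and i: "i < N"
  shows "synthesis_op n N h * diag_one n N p i * analysis_op n N f =
    outer_prod n (complex_of_real (weight n N p i) \<cdot>\<^sub>v h i) (f i)"
    (is "?L = ?M")
proof (rule eq_matI)
  let ?q = "complex_of_real (weight n N p i)"
  have D: "diag_one n N p i = mat_diag N (\<lambda>j. if j = i then ?q else 0)"
    by (rule eq_matI) (auto simp: diag_one_def mat_diag_def)
  have SD: "synthesis_op n N h * diag_one n N p i \<in> carrier_mat n N"
    unfolding D by (rule mult_carrier_mat[OF synthesis_op_carrier mat_diag_dim])
  fix k l assume "k < dim_row ?M" "l < dim_col ?M"
  then have k: "k < n" and l: "l < n" by auto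
  have "?L $$ (k,l) = (\<Sum>j<N. (synthesis_op n N h * diag_one n N p i) $$ (k,j) * analysis_op n N f $$ (j,l))"
    by (rule index_mult_mat_sum[OF SD analysis_op_carrier k l])
  also have "\<dots> = (\<Sum>j<N. if j = i then h i $ k * ?q * cnj (f i $ l) else 0)"
    unfolding D mat_diag_mult_right[OF synthesis_op_carrier] using k l
    by (intro sum.cong refl) (simp add: synthesis_op_def analysis_op_def)
  also have "\<dots> = ?M $$ (k,l)" using i k l h by (simp add: outer_prod_def)
  finally show "?L $$ (k,l) = ?M $$ (k,l)" .
qed (auto simp: diag_one_def outer_prod_def)

lemma R1p_eq_Max:
  assumes n: "0 < n" and f: "\<And>i. i < N \<Longrightarrow> f i \<in> carrier_vec n"
    and h: "\<And>i. i < N \<Longrightarrow> h i \<in> carrier_vec n" and q: "\<And>i. i < N \<Longrightarrow> 0 \<le> weight n N p i"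
  shows "R1p n N p f h = Max ((\<lambda>i. weight n N p i * cmod (h i \<bullet>c f i)) ` {..<N})"
proof -
  have sr: "spectral_radius (synthesis_op n N h * diag_one n N p i * analysis_op n N f) =
      weight n N p i * cmod (h i \<bullet>c f i)" if i: "i < N" for i
  proof -
    let ?x = "complex_of_real (weight n N p i) \<cdot>\<^sub>v h i"
    have "spectral_radius (synthesis_op n N h * diag_one n N p i * analysis_op n N f) = cmod (?x \<bullet>c f i)"
      using synthesis_diag_one_analysis[where h = h and i = i, OF h[OF i] i] h[OF i]
        spectral_radius_outer_prod[OF n _ f[OF i], of ?x]
      by simp
    also have "\<dots> = weight n N p i * cmod (h i \<bullet>c f i)"
      using q[OF i] h[OF i] f[OF i] by (simp add: norm_mult)
    finally show ?thesis .
  qed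
  have "{spectral_radius (synthesis_op n N h * D * analysis_op n N f) | D. D \<in> D1p n N p} =
      (\<lambda>i. spectral_radius (synthesis_op n N h * diag_one n N p i * analysis_op n N f)) ` {..<N}"
    unfolding D1p_def by auto
  also have "\<dots> = (\<lambda>i. weight n N p i * cmod (h i \<bullet>c f i)) ` {..<N}"
    using sr by (intro image_cong refl) simp
  finally show ?thesis unfolding R1p_def by simp
qed

lemma weight_nonneg:
  assumes p: "prob_seq N p" and w: "(\<Sum>j<N. p j) - p i \<noteq> 0" and i: "i < N"
  shows "0 \<le> weight n N p i"
proof -
  have sum: "(\<Sum>j<N. p j) = 1" and "p i \<le> 1" using p i unfolding prob_seq_def by auto
  then have "0 < (\<Sum>j<N. p j) - p i" using w by linarith
  moreover have "0 \<le> real N - 1" using i by simp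
  ultimately show ?thesis unfolding weight_def sum by simp
qed

section \<open>Dual frames\<close>

locale finite_frame =
  fixes K :: "complex set" and n N :: nat and f :: "nat \<Rightarrow> complex vec"
  assumes scalars: "K = \<real> \<or> K = UNIV"
    and frame: "is_frame K n N f"
begin

lemma scalars_closed:
  "x \<in> K \<Longrightarrow> y \<in> K \<Longrightarrow> x * y \<in> K" "x \<in> K \<Longrightarrow> y \<in> K \<Longrightarrow> x - y \<in> K"
  "x \<in> K \<Longrightarrow> - x \<in> K" "x \<in> K \<Longrightarrow> cnj x \<in> K" "0 \<in> K" "1 \<in> K"
  using scalars by (auto simp: Reals_cnj_iff)

lemma scalars_sum: "(\<And>i. i \<in> A \<Longrightarrow> g i \<in> K) \<Longrightarrow> sum g A \<in> K"
  using scalars by (auto intro: sum_in_Reals)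

lemma frame_vec_hspace: "i < N \<Longrightarrow> f i \<in> hspace K n"
  using frame unfolding is_frame_def by blast

lemma frame_vec_carrier: "i < N \<Longrightarrow> f i \<in> carrier_vec n"
  using frame_vec_hspace unfolding hspace_def by blast

lemma unit_vec_hspace: "k < n \<Longrightarrow> unit_vec n k \<in> hspace K n"
  using scalars_closed(5,6) unfolding hspace_def by (auto simp: unit_vec_def)

lemma cscalar_prod_frame_vec_scalars: "v \<in> hspace K n \<Longrightarrow> i < N \<Longrightarrow> v \<bullet>c f i \<in> K"
  using frame_vec_hspace[of i] unfolding hspace_def
  by (auto simp: cscalar_prod_sum[of _ n] intro!: scalars_sum scalars_closed)

lemma orthogonal_frame_eq_0:
  assumes v: "v \<in> carrier_vec n" and perp: "\<And>i. i < N \<Longrightarrow> v \<bullet>c f i = 0"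
  shows "v = 0\<^sub>v n"
proof (rule eq_vecI)
  fix k assume "k < dim_vec (0\<^sub>v n :: complex vec)"
  then have k: "k < n" by simp
  obtain c where c: "unit_vec n k = vec n (\<lambda>l. \<Sum>i<N. c i * f i $ l)"
    using frame unit_vec_hspace[OF k] unfolding is_frame_def kspan_def by blast
  have "v $ k = v \<bullet>c unit_vec n k"
    using k by (simp add: cscalar_prod_sum[of _ n] if_distrib cong: if_cong)
  also have "\<dots> = (\<Sum>l<n. \<Sum>i<N. v $ l * cnj (c i) * cnj (f i $ l))"
    unfolding c by (simp add: cscalar_prod_sum[of _ n] cnj_sum sum_distrib_left mult.assoc)
  also have "\<dots> = (\<Sum>i<N. cnj (c i) * (v \<bullet>c f i))"
    by (subst sum.swap) (simp add: cscalar_prod_sum[OF frame_vec_carrier] sum_distrib_left mult_ac)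
  also have "\<dots> = 0" using perp by simp
  finally show "v $ k = 0\<^sub>v n $ k" using k by simp
qed (use v in simp)

lemma frame_op_positive_def:
  assumes v: "v \<in> carrier_vec n" "v \<noteq> 0\<^sub>v n"
  shows "0 < Re ((frame_op n N f *\<^sub>v v) \<bullet>c v)"
proof -
  have "analysis_op n N f *\<^sub>v v \<noteq> 0\<^sub>v N"
  proof
    assume A0: "analysis_op n N f *\<^sub>v v = 0\<^sub>v N"
    have "v \<bullet>c f i = 0" if "i < N" for i
      using arg_cong[OF A0, of "\<lambda>w. w $ i"] that
      by (simp add: analysis_op_mult_vec[OF frame_vec_carrier v(1)])
    then show False using orthogonal_frame_eq_0[OF v(1)] v(2) by blast
  qed
  then show ?thesis
    using norm_sq_nonneg norm_sq_eq_0_iff[OF mult_mat_vec_carrier[OF analysis_op_carrier v(1)]]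
    by (simp add: frame_op_cscalar_prod[OF v(1)] less_le)
qed

lemma frame_op_unitary_diag:
  "\<exists>U d. unitary n U \<and> (\<forall>i<n. 0 < d i) \<and> frame_op n N f = unitary_diag n U d"
  using positive_def_unitary_diag[OF frame_op_carrier mat_adjoint_frame_op frame_op_positive_def] .

lemma inv_frame_op:
  "inv_mat n (frame_op n N f) \<in> carrier_mat n n"
  "frame_op n N f * inv_mat n (frame_op n N f) = 1\<^sub>m n"
  "inv_mat n (frame_op n N f) * frame_op n N f = 1\<^sub>m n"
  "mat_adjoint (inv_mat n (frame_op n N f)) = inv_mat n (frame_op n N f)"
proof -
  obtain U d where U: "unitary n U" and d: "\<forall>i<n. 0 < d i" and S: "frame_op n N f = unitary_diag n U d"
    using frame_op_unitary_diag by blast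
  then have d0: "d i \<noteq> 0" if "i < n" for i
    using that by (metis less_irrefl)
  have inv: "inv_mat n (unitary_diag n U d) = unitary_diag n U (\<lambda>i. 1 / d i)"
    using d0 by (rule inv_mat_unitary_diag[OF U])
  show "inv_mat n (frame_op n N f) \<in> carrier_mat n n"
    "frame_op n N f * inv_mat n (frame_op n N f) = 1\<^sub>m n"
    "inv_mat n (frame_op n N f) * frame_op n N f = 1\<^sub>m n"
    "mat_adjoint (inv_mat n (frame_op n N f)) = inv_mat n (frame_op n N f)"
    by (simp_all add: inv S unitary_diag_carrier[OF U] unitary_diag_inverse[OF U d0]
        mat_adjoint_unitary_diag[OF U])
qed

lemma inv_sqrt_frame_op:
  "inv_sqrt_mat n (frame_op n N f) \<in> carrier_mat n n"
  "mat_adjoint (inv_sqrt_mat n (frame_op n N f)) = inv_sqrt_mat n (frame_op n N f)"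
  "inv_sqrt_mat n (frame_op n N f) * inv_sqrt_mat n (frame_op n N f) = inv_mat n (frame_op n N f)"
proof -
  obtain U d where U: "unitary n U" and d: "\<forall>i<n. 0 < d i" and S: "frame_op n N f = unitary_diag n U d"
    using frame_op_unitary_diag by blast
  have R: "inv_sqrt_mat n (unitary_diag n U d) = unitary_diag n U (\<lambda>i. 1 / sqrt (d i))"
    using d by (intro inv_sqrt_mat_unitary_diag[OF U]) auto
  have "inv_mat n (unitary_diag n U d) = unitary_diag n U (\<lambda>i. 1 / d i)"
    using d by (intro inv_mat_unitary_diag[OF U]) (metis less_irrefl)
  also have "\<dots> = unitary_diag n U (\<lambda>i. 1 / sqrt (d i) * (1 / sqrt (d i)))"
    using d by (intro unitary_diag_cong) (simp add: less_imp_le)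
  also have "\<dots> = inv_sqrt_mat n (unitary_diag n U d) * inv_sqrt_mat n (unitary_diag n U d)"
    by (simp only: R unitary_diag_mult[OF U])
  finally show "inv_sqrt_mat n (frame_op n N f) \<in> carrier_mat n n"
    "mat_adjoint (inv_sqrt_mat n (frame_op n N f)) = inv_sqrt_mat n (frame_op n N f)"
    "inv_sqrt_mat n (frame_op n N f) * inv_sqrt_mat n (frame_op n N f) = inv_mat n (frame_op n N f)"
    by (simp_all add: S R unitary_diag_carrier[OF U] mat_adjoint_unitary_diag[OF U])
qed

definition canonical_dual :: "nat \<Rightarrow> complex vec" where
  "canonical_dual i = inv_mat n (frame_op n N f) *\<^sub>v f i"

lemma canonical_dual_carrier: "i < N \<Longrightarrow> canonical_dual i \<in> carrier_vec n"
  unfolding canonical_dual_def using inv_frame_op(1) frame_vec_carrier by simp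

lemma canonical_dual_reconstruction:
  assumes v: "v \<in> carrier_vec n"
  shows "synthesis_op n N canonical_dual *\<^sub>v (analysis_op n N f *\<^sub>v v) = v"
    and "synthesis_op n N f *\<^sub>v (analysis_op n N canonical_dual *\<^sub>v v) = v"
proof -
  let ?S = "frame_op n N f" and ?Si = "inv_mat n (frame_op n N f)"
  have g: "canonical_dual = (\<lambda>i. ?Si *\<^sub>v f i)" by (simp add: canonical_dual_def fun_eq_iff)
  have SA: "synthesis_op n N f * analysis_op n N f = ?S" by (simp add: frame_op_def)
  have "synthesis_op n N canonical_dual * analysis_op n N f = ?Si * ?S"
    by (simp add: g synthesis_op_mult[OF frame_vec_carrier inv_frame_op(1)] SA
        assoc_mult_mat[OF inv_frame_op(1) synthesis_op_carrier analysis_op_carrier])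
  then show "synthesis_op n N canonical_dual *\<^sub>v (analysis_op n N f *\<^sub>v v) = v"
    using v by (simp flip: assoc_mult_mat_vec[OF synthesis_op_carrier analysis_op_carrier v]
        add: inv_frame_op(3))
  have "synthesis_op n N f * analysis_op n N canonical_dual = ?S * ?Si"
    by (simp add: g analysis_op_mult[OF frame_vec_carrier inv_frame_op(1)] inv_frame_op(4) SA
        flip: assoc_mult_mat[OF synthesis_op_carrier analysis_op_carrier inv_frame_op(1)])
  then show "synthesis_op n N f *\<^sub>v (analysis_op n N canonical_dual *\<^sub>v v) = v"
    using v by (simp flip: assoc_mult_mat_vec[OF synthesis_op_carrier analysis_op_carrier v]
        add: inv_frame_op(2))
qed

text \<open>Over the reals, the frame operator has real entries, so it commutes with entrywise
  conjugation, and it is injective.\<close>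

lemma canonical_dual_hspace:
  assumes i: "i < N"
  shows "canonical_dual i \<in> hspace K n"
proof (cases "K = UNIV")
  case True
  then show ?thesis using canonical_dual_carrier[OF i] by (simp add: hspace_def)
next
  case False
  then have K: "K = \<real>" using scalars by blast
  let ?S = "frame_op n N f" and ?g = "canonical_dual i"
  have real_f: "cnj (f j $ k) = f j $ k" if "j < N" "k < n" for j k
    using frame_vec_hspace[OF that(1)] that(2) K by (auto simp: hspace_def Reals_cnj_iff)
  have g: "?g \<in> carrier_vec n" by (rule canonical_dual_carrier[OF i])
  have Sg: "?S *\<^sub>v ?g = f i"
    using frame_vec_carrier[OF i] inv_frame_op(2)
    by (simp add: canonical_dual_def flip: assoc_mult_mat_vec[OF frame_op_carrier inv_frame_op(1)])
  have "?S *\<^sub>v conjugate ?g = conjugate (f i)"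
    using mult_mat_vec_conjugate[OF frame_op_carrier cnj_frame_op[OF real_f] g] Sg by simp
  also have "conjugate (f i) = f i"
    using real_f[OF i] frame_vec_carrier[OF i] by (intro eq_vecI) auto
  finally have "inv_mat n ?S *\<^sub>v (?S *\<^sub>v conjugate ?g) = ?g"
    by (simp add: canonical_dual_def)
  then have "conjugate ?g = ?g"
    using g inv_frame_op(3)
    by (simp flip: assoc_mult_mat_vec[OF inv_frame_op(1) frame_op_carrier])
  then have "cnj (?g $ k) = ?g $ k" if "k < n" for k
    using vec_index_conjugate[of k ?g] g that by (simp del: vec_index_conjugate)
  then show ?thesis using g K by (auto simp: hspace_def Reals_cnj_iff)
qed

lemma kspan_subset_hspace:
  assumes "\<And>i. i \<in> A \<Longrightarrow> g i \<in> hspace K n"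
  shows "kspan K n g A \<subseteq> hspace K n"
  using assms unfolding kspan_def hspace_def
  by (auto intro!: scalars_sum scalars_closed)

lemma is_dual_frame_canonical_dual: "is_dual_frame K n N f canonical_dual"
proof -
  have "hspace K n \<subseteq> kspan K n canonical_dual {..<N}"
  proof
    fix v assume v: "v \<in> hspace K n"
    show "v \<in> kspan K n canonical_dual {..<N}"
      unfolding kspan_def
    proof (intro CollectI exI conjI)
      have "v \<in> carrier_vec n" using v by (simp add: hspace_def)
      then show "v = vec n (\<lambda>k. \<Sum>i<N. (v \<bullet>c f i) * canonical_dual i $ k)"
        using canonical_dual_reconstruction(1)
          synthesis_analysis_mult_vec[OF frame_vec_carrier, where h = canonical_dual] by simp
      show "\<forall>i\<in>{..<N}. v \<bullet>c f i \<in> K"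
        using cscalar_prod_frame_vec_scalars[OF v] by simp
    qed
  qed
  then have "is_frame K n N canonical_dual"
    using kspan_subset_hspace[of "{..<N}" canonical_dual] canonical_dual_hspace
    unfolding is_frame_def by blast
  moreover have "v = vec n (\<lambda>k. \<Sum>i<N. (v \<bullet>c f i) * canonical_dual i $ k)"
    "v = vec n (\<lambda>k. \<Sum>i<N. (v \<bullet>c canonical_dual i) * f i $ k)" if "v \<in> hspace K n" for v
  proof -
    have v: "v \<in> carrier_vec n" using that by (simp add: hspace_def)
    show "v = vec n (\<lambda>k. \<Sum>i<N. (v \<bullet>c f i) * canonical_dual i $ k)"
      "v = vec n (\<lambda>k. \<Sum>i<N. (v \<bullet>c canonical_dual i) * f i $ k)"
      using canonical_dual_reconstruction[OF v]
        synthesis_analysis_mult_vec[OF frame_vec_carrier v, where h = canonical_dual]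
        synthesis_analysis_mult_vec[OF canonical_dual_carrier v, where h = f]
      by simp_all
  qed
  ultimately show ?thesis unfolding is_dual_frame_def by blast
qed

lemma cscalar_prod_canonical_dual:
  assumes i: "i < N"
  shows "canonical_dual i \<bullet>c f i = complex_of_real (norm_sq (inv_sqrt_mat n (frame_op n N f) *\<^sub>v f i))"
proof -
  let ?R = "inv_sqrt_mat n (frame_op n N f)"
  have fi: "f i \<in> carrier_vec n" by (rule frame_vec_carrier[OF i])
  have "canonical_dual i = ?R *\<^sub>v (?R *\<^sub>v f i)"
    using fi by (simp add: canonical_dual_def inv_sqrt_frame_op(3)[symmetric]
        assoc_mult_mat_vec[OF inv_sqrt_frame_op(1) inv_sqrt_frame_op(1)])
  then show ?thesis
    using cscalar_prod_mat_adjoint[OF inv_sqrt_frame_op(1)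
        mult_mat_vec_carrier[OF inv_sqrt_frame_op(1) fi] fi]
    by (simp add: inv_sqrt_frame_op(2) cscalar_prod_self_eq_norm_sq)
qed

lemma dual_frame_carrier: "is_dual_frame K n N f h \<Longrightarrow> i < N \<Longrightarrow> h i \<in> carrier_vec n"
  unfolding is_dual_frame_def is_frame_def hspace_def by blast

lemma dual_frame_unit_vec:
  assumes h: "is_dual_frame K n N f h" and k: "k < n"
  shows "vec n (\<lambda>l. \<Sum>i<N. cnj (h i $ k) * f i $ l) = unit_vec n k"
proof -
  have "unit_vec n k = vec n (\<lambda>l. \<Sum>i<N. (unit_vec n k \<bullet>c h i) * f i $ l)"
    using h unit_vec_hspace[OF k] unfolding is_dual_frame_def by blast
  also have "\<dots> = vec n (\<lambda>l. \<Sum>i<N. cnj (h i $ k) * f i $ l)"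
    using k
    by (intro eq_vecI) (auto simp: unit_vec_cscalar_prod[OF dual_frame_carrier[OF h]] intro!: sum.cong)
  finally show ?thesis by simp
qed

lemma kspan_direct_sum_component:
  assumes U: "U \<subseteq> {..<N}" and direct: "kspan K n f U \<inter> kspan K n f ({..<N} - U) = {0\<^sub>v n}"
    and c: "\<And>i. i < N \<Longrightarrow> c i \<in> K" and zero: "vec n (\<lambda>l. \<Sum>i<N. c i * f i $ l) = 0\<^sub>v n"
  shows "vec n (\<lambda>l. \<Sum>i\<in>U. c i * f i $ l) = 0\<^sub>v n"
proof -
  let ?w = "vec n (\<lambda>l. \<Sum>i\<in>U. c i * f i $ l)"
  have "?w \<in> kspan K n f U"
    unfolding kspan_def using c U by blast
  moreover have "?w = vec n (\<lambda>l. \<Sum>i\<in>{..<N} - U. (- c i) * f i $ l)"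
  proof (rule eq_vecI)
    fix l assume "l < dim_vec (vec n (\<lambda>l. \<Sum>i\<in>{..<N} - U. (- c i) * f i $ l))"
    then have l: "l < n" by simp
    have "(\<Sum>i\<in>{..<N} - U. c i * f i $ l) + (\<Sum>i\<in>U. c i * f i $ l) = 0"
      using arg_cong[OF zero, of "\<lambda>v. v $ l"] l by (simp add: sum.subset_diff[OF U])
    then show "?w $ l = vec n (\<lambda>l. \<Sum>i\<in>{..<N} - U. (- c i) * f i $ l) $ l"
      using l by (simp add: sum_negf eq_neg_iff_add_eq_0 add.commute)
  qed simp
  moreover have "vec n (\<lambda>l. \<Sum>i\<in>{..<N} - U. (- c i) * f i $ l) \<in> kspan K n f ({..<N} - U)"
    unfolding kspan_def using c by (intro CollectI exI[of _ "\<lambda>i. - c i"] conjI) (auto intro: scalars_closed)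
  ultimately have "?w \<in> kspan K n f U \<inter> kspan K n f ({..<N} - U)" by simp
  then show ?thesis using direct by blast
qed

lemma dual_frame_diff_relation:
  assumes h: "is_dual_frame K n N f h" and h': "is_dual_frame K n N f h'" and k: "k < n"
  shows "vec n (\<lambda>l. \<Sum>i<N. (cnj (h i $ k) - cnj (h' i $ k)) * f i $ l) = 0\<^sub>v n"
proof (rule eq_vecI)
  fix l assume "l < dim_vec (0\<^sub>v n :: complex vec)"
  then have l: "l < n" by simp
  have "(\<Sum>i<N. (cnj (h i $ k) - cnj (h' i $ k)) * f i $ l) =
      (\<Sum>i<N. cnj (h i $ k) * f i $ l) - (\<Sum>i<N. cnj (h' i $ k) * f i $ l)"
    by (simp add: left_diff_distrib sum_subtractf)
  also have "\<dots> = 0"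
    using arg_cong[OF dual_frame_unit_vec[OF h k], of "\<lambda>v. v $ l"]
      arg_cong[OF dual_frame_unit_vec[OF h' k], of "\<lambda>v. v $ l"] l by simp
  finally show "vec n (\<lambda>l. \<Sum>i<N. (cnj (h i $ k) - cnj (h' i $ k)) * f i $ l) $ l = 0\<^sub>v n $ l"
    using l by simp
qed simp

text \<open>For each \<open>k\<close>, the conjugated \<open>k\<close>-th coordinates of \<open>h - h'\<close> are the coefficients of
  a linear relation among the \<open>f i\<close>; by directness its part over \<open>U\<close> vanishes.\<close>

lemma dual_frame_partial_trace:
  assumes h: "is_dual_frame K n N f h" and h': "is_dual_frame K n N f h'"
    and U: "U \<subseteq> {..<N}" and direct: "kspan K n f U \<inter> kspan K n f ({..<N} - U) = {0\<^sub>v n}"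
  shows "(\<Sum>i\<in>U. f i \<bullet>c h i) = (\<Sum>i\<in>U. f i \<bullet>c h' i)"
proof -
  define c where "c k i = cnj (h i $ k) - cnj (h' i $ k)" for k i
  have hK: "h i $ k \<in> K" "h' i $ k \<in> K" if "i < N" "k < n" for i k
    using h h' that unfolding is_dual_frame_def is_frame_def hspace_def by blast+
  have zero: "(\<Sum>i\<in>U. c k i * f i $ k) = 0" if k: "k < n" for k
  proof -
    have U0: "vec n (\<lambda>l. \<Sum>i\<in>U. c k i * f i $ l) = 0\<^sub>v n"
      using hK k dual_frame_diff_relation[OF h h' k]
      by (intro kspan_direct_sum_component[OF U direct]) (auto simp: c_def intro!: scalars_closed)
    show ?thesis using arg_cong[OF U0, of "\<lambda>v. v $ k"] k by simp
  qed
  have "(\<Sum>i\<in>U. f i \<bullet>c h i) - (\<Sum>i\<in>U. f i \<bullet>c h' i) = (\<Sum>i\<in>U. \<Sum>k<n. c k i * f i $ k)"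
    unfolding sum_subtractf[symmetric]
  proof (rule sum.cong[OF refl])
    fix i assume "i \<in> U"
    then have i: "i < N" using U by blast
    show "f i \<bullet>c h i - f i \<bullet>c h' i = (\<Sum>k<n. c k i * f i $ k)"
      by (simp add: cscalar_prod_sum[OF dual_frame_carrier[OF h i]] c_def algebra_simps
          cscalar_prod_sum[OF dual_frame_carrier[OF h' i]] sum_subtractf[symmetric])
  qed
  also have "\<dots> = (\<Sum>k<n. \<Sum>i\<in>U. c k i * f i $ k)"
    by (rule sum.swap)
  also have "\<dots> = 0" using zero by simp
  finally show ?thesis by simp
qed

lemma canonical_dual_partial_trace_le:
  assumes h: "is_dual_frame K n N f h"
    and U: "U \<subseteq> {..<N}" and direct: "kspan K n f U \<inter> kspan K n f ({..<N} - U) = {0\<^sub>v n}"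
  shows "(\<Sum>i\<in>U. norm_sq (inv_sqrt_mat n (frame_op n N f) *\<^sub>v f i)) \<le>
    (\<Sum>i\<in>U. cmod (h i \<bullet>c f i))"
proof -
  have "(\<Sum>i\<in>U. norm_sq (inv_sqrt_mat n (frame_op n N f) *\<^sub>v f i)) =
      Re (\<Sum>i\<in>U. f i \<bullet>c canonical_dual i)"
    unfolding Re_sum using U
    by (intro sum.cong refl) (auto simp: cscalar_prod_canonical_dual
        simp flip: cnj_cscalar_prod[OF canonical_dual_carrier frame_vec_carrier])
  also have "\<dots> = Re (\<Sum>i\<in>U. f i \<bullet>c h i)"
    using dual_frame_partial_trace[OF is_dual_frame_canonical_dual h U direct] by simp
  also have "\<dots> \<le> (\<Sum>i\<in>U. cmod (h i \<bullet>c f i))"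
    unfolding Re_sum using U
    by (intro sum_mono) (auto simp: complex_Re_le_cmod
        simp flip: cnj_cscalar_prod[OF dual_frame_carrier[OF h] frame_vec_carrier])
  finally show ?thesis .
qed

lemma R1p_canonical_dual:
  assumes n: "0 < n" and q: "\<And>i. i < N \<Longrightarrow> 0 \<le> weight n N p i"
  shows "R1p n N p f canonical_dual =
    Max ((\<lambda>i. weight n N p i * norm_sq (inv_sqrt_mat n (frame_op n N f) *\<^sub>v f i)) ` {..<N})"
proof -
  have "(\<lambda>i. weight n N p i * cmod (canonical_dual i \<bullet>c f i)) ` {..<N} =
      (\<lambda>i. weight n N p i * norm_sq (inv_sqrt_mat n (frame_op n N f) *\<^sub>v f i)) ` {..<N}"
    by (intro image_cong refl) (simp add: cscalar_prod_canonical_dual norm_sq_nonneg)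
  then show ?thesis
    using R1p_eq_Max[OF n frame_vec_carrier canonical_dual_carrier q] by simp
qed

text \<open>On the indices \<open>U\<close> where the canonical dual attains the maximum, its partial trace
  equals that of \<open>h\<close>, so \<open>h\<close> cannot do strictly better on all of them.\<close>

lemma R1p_dual_frame_ge:
  fixes p :: "nat \<Rightarrow> real"
  assumes n: "0 < n" and N: "0 < N" and q: "\<And>i. i < N \<Longrightarrow> 0 \<le> weight n N p i"
    and h: "is_dual_frame K n N f h"
  defines "a \<equiv> \<lambda>i. weight n N p i * norm_sq (inv_sqrt_mat n (frame_op n N f) *\<^sub>v f i)"
  defines "U \<equiv> {i. i < N \<and> a i = Max (a ` {..<N})}"
  assumes direct: "kspan K n f U \<inter> kspan K n f ({..<N} - U) = {0\<^sub>v n}"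
  shows "Max (a ` {..<N}) \<le> R1p n N p f h"
proof -
  let ?c = "Max (a ` {..<N})"
  define T where "T i = weight n N p i * cmod (h i \<bullet>c f i)" for i
  have U: "U \<subseteq> {..<N}" "finite U" unfolding U_def by (auto intro: finite_subset)
  have "?c \<in> a ` {..<N}" using N by (intro Max_in) auto
  then obtain i0 where i0: "i0 \<in> U" unfolding U_def by auto
  have "\<exists>i\<in>U. ?c \<le> T i"
  proof (rule ccontr)
    assume less: "\<not> (\<exists>i\<in>U. ?c \<le> T i)"
    have "cmod (h i \<bullet>c f i) < norm_sq (inv_sqrt_mat n (frame_op n N f) *\<^sub>v f i)" if iU: "i \<in> U" for i
    proof -
      have i: "i < N" and "a i = ?c" using iU by (auto simp: U_def)
      then have "T i < a i" using less iU by auto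
      then show ?thesis using q[OF i] by (simp add: T_def a_def mult_less_cancel_left)
    qed
    then have "(\<Sum>i\<in>U. cmod (h i \<bullet>c f i)) <
        (\<Sum>i\<in>U. norm_sq (inv_sqrt_mat n (frame_op n N f) *\<^sub>v f i))"
      using U(2) i0 by (intro sum_strict_mono) auto
    then show False using canonical_dual_partial_trace_le[OF h U(1) direct] by simp
  qed
  then obtain i where i: "i \<in> U" and ci: "?c \<le> T i" by blast
  have "T i \<le> R1p n N p f h"
    using i U(1) R1p_eq_Max[OF n frame_vec_carrier dual_frame_carrier[OF h] q]
    by (auto simp: T_def intro!: Max_ge)
  then show ?thesis using ci by linarith
qed

end

theorem proposition3p2:
  fixes K :: "complex set" and n N :: nat and f :: "nat \<Rightarrow> complex vec" and p :: "nat \<Rightarrow> real"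
  assumes field: "K = \<real> \<or> K = UNIV"
    and npos: "0 < n"
    and Nn: "N \<ge> n"
    and frame: "is_frame K n N f"
    and prob: "prob_seq N p"
    and wdef: "\<forall>i<N. (\<Sum>j<N. p j) - p i \<noteq> 0"
  defines "S \<equiv> frame_op n N f"
  defines "a \<equiv> (\<lambda>i. weight n N p i * norm_sq (inv_sqrt_mat n S *\<^sub>v f i))"
  defines "c \<equiv> Max (a ` {..<N})"
  defines "U1 \<equiv> {i. i < N \<and> a i = c}"
  defines "U2 \<equiv> {..<N} - U1"
  assumes inter: "kspan K n f U1 \<inter> kspan K n f U2 = {0\<^sub>v n}"
  shows "prob_spec_opt_dual K n N p f (\<lambda>i. inv_mat n S *\<^sub>v f i)"
proof -
  interpret finite_frame K n N f
    using field frame by unfold_locales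
  have q: "\<And>i. i < N \<Longrightarrow> 0 \<le> weight n N p i"
    using weight_nonneg[OF prob] wdef by blast
  have N: "0 < N" using npos Nn by linarith
  have R1p_can: "R1p n N p f canonical_dual = c"
    unfolding c_def a_def S_def by (rule R1p_canonical_dual[OF npos q])
  have "Inf {R1p n N p f g | g. is_dual_frame K n N f g} = c"
  proof (rule cInf_eq_minimum)
    show "c \<in> {R1p n N p f g | g. is_dual_frame K n N f g}"
      using R1p_can is_dual_frame_canonical_dual by blast
    fix x assume "x \<in> {R1p n N p f g | g. is_dual_frame K n N f g}"
    then show "c \<le> x"
      using R1p_dual_frame_ge[OF npos N q] inter unfolding U2_def U1_def c_def a_def S_def by blast
  qed
  moreover have "canonical_dual = (\<lambda>i. inv_mat n S *\<^sub>v f i)"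
    by (simp add: fun_eq_iff canonical_dual_def S_def)
  ultimately show ?thesis
    using R1p_can is_dual_frame_canonical_dual unfolding prob_spec_opt_dual_def by simp
qed

end
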